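(* Let $\mathcal{E}_{\mathrm{MUB}}$ be the minimal Clifford measurement ensemble described in the context, $O$ a Hermitian observable not proportional to the identity, and $O_0=O-2^{-n}\operatorname{tr}(O)\mathbb{I}$. For $U\in\mathcal{E}_{\mathrm{MUB}}$ let $\Phi_{U,\mathbf{b}}=U^{\dagger}|\mathbf{b}\rangle\langle\mathbf{b}|U$, $B_U=\max_{\mathbf{b}\in\{0,1\}^n}|\operatorname{tr}(\Phi_{U,\mathbf{b}}O_0)|$ and $p_U=B_U/\sum_{U'\in\mathcal{E}_{\mathrm{MUB}}}B_{U'}$. Consider the biased-MCM estimator: sample $U$ with probability $p_U$, measure $U\rho U^{\dagger}$ in the computational basis obtaining $\mathbf{b}$ with probability $\langle\mathbf{b}|U\rho U^{\dagger}|\mathbf{b}\rangle$, and output $\hat O=\operatorname{tr}(O_0\Phi_{U,\mathbf{b}})/p_U+2^{-n}\operatorname{tr}(O)$. Then for every state $\rho$, $$\mathrm{Var}(\hat O)\le\Big(\sum_{U\in\mathcal{E}_{\mathrm{MUB}}}B_U\Big)^2\le\mathcal{D}(O_0)^2,$$ where $\mathcal{D}(A)=2^{-n}\sum_{P\in\mathbf{P}^n}|\operatorname{tr}(PA)|$ is the stabilizer norm and $\mathbf{P}^n$ is the set of the $4^n$ $n$-fold tensor products of $\mathbb{I}_2,X,Y,Z$.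
   Context: Galois arithmetic: fix an irreducible polynomial $P_n(x)$ of degree $n$ over $\mathrm{GF}(2)$; integers $a=\sum_i a_i2^i\in\{0,\dots,2^n-1\}$ are identified with polynomials $\sum_ia_ix^i$ and row vectors $(a_0,\dots,a_{n-1})$, and $a\odot b=a(x)b(x)\bmod P_n(x)$. Let $\Gamma_{k,j}$ be the coefficient of $x^j$ in $x^k\bmod P_n$, and $M_n^{(0)}$ the $n\times n$ binary matrix with entries $\Gamma_{p+q,0}$. For $v\in\{0,\dots,2^n-1\}$ let $\alpha_{v,i,j}$ be the $j$-th entry of $(v\odot 2^i)M_n^{(0)}$ mod 2 and $g_i^{(v)}=\sqrt{-1}^{\,\alpha_{v,i,i}}X_i\prod_jZ_j^{\alpha_{v,i,j}}$ ($X_i,Z_i$ Paulis on qubit $i$). $\mathcal{E}_{\mathrm{MUB}}=\{\mathbb{I}\}\cup\{U_v\}_{v=0}^{2^n-1}$, where $U_v$ is a Clifford unitary with $U_v^{\dagger}Z_iU_v=\pm g_i^{(v)}$ for all $i$. Unitaries with $p_U=0$ are never sampled. The variance is over the random $U$ and $\mathbf{b}$. *)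

theory Defs
  imports Complex_Main "Berlekamp_Zassenhaus.Finite_Field"
    "Jordan_Normal_Form.Schur_Decomposition"
begin

type_synonym gf2 = "bool mod_ring"

definition poly_of_nat :: "nat \<Rightarrow> nat \<Rightarrow> gf2 poly" where
  "poly_of_nat n a = (\<Sum>i<n. monom (if bit a i then 1 else 0) i)"

definition Gamma :: "gf2 poly \<Rightarrow> nat \<Rightarrow> nat \<Rightarrow> gf2" where
  "Gamma P k j = coeff (monom 1 k mod P) j"

definition M0 :: "gf2 poly \<Rightarrow> nat \<Rightarrow> nat \<Rightarrow> gf2" where
  "M0 P p q = Gamma P (p + q) 0"

text \<open>alpha v i j = j-th entry of the row vector (v (.) 2^i) M^(0), over GF(2).
  Here v (.) 2^i = v(x) x^i mod P, whose coefficient vector has length n = degree P.\<close>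
definition alpha :: "gf2 poly \<Rightarrow> nat \<Rightarrow> nat \<Rightarrow> nat \<Rightarrow> gf2" where
  "alpha P v i j = (\<Sum>p<degree P. coeff (poly_of_nat (degree P) v * monom 1 i mod P) p * M0 P p j)"

definition trace :: "complex mat \<Rightarrow> complex" where
  "trace A = (\<Sum>i<dim_row A. A $$ (i, i))"

section \<open>n-qubit operators (basis index b, qubit i <-> bit i of b)\<close>

text \<open>X^x Z^z for bit masks x, z: the tensor product of X^(x_i) Z^(z_i).\<close>
definition XZ :: "nat \<Rightarrow> nat \<Rightarrow> nat \<Rightarrow> complex mat" where
  "XZ n x z = mat (2^n) (2^n)
     (\<lambda>(r, c). if r = xor c x then (-1) ^ card {k. k < n \<and> bit c k \<and> bit z k} else 0)"

text \<open>The Pauli string with X-part x and Z-part z: tensor product of I, X, Y = i X Z, Z.\<close>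
definition pauli :: "nat \<Rightarrow> nat \<Rightarrow> nat \<Rightarrow> complex mat" where
  "pauli n x z = (\<i> ^ card {k. k < n \<and> bit x k \<and> bit z k}) \<cdot>\<^sub>m XZ n x z"

definition Paulis :: "nat \<Rightarrow> complex mat set" where
  "Paulis n = {pauli n x z | x z. x < 2^n \<and> z < 2^n}"

definition Xq :: "nat \<Rightarrow> nat \<Rightarrow> complex mat" where
  "Xq n i = pauli n (2^i) 0"

definition Zq :: "nat \<Rightarrow> nat \<Rightarrow> complex mat" where
  "Zq n i = pauli n 0 (2^i)"

definition gf2_to_nat :: "gf2 \<Rightarrow> nat" where
  "gf2_to_nat a = (if a = 1 then 1 else 0)"

definition gen :: "gf2 poly \<Rightarrow> nat \<Rightarrow> nat \<Rightarrow> complex mat" where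
  "gen P v i = (let n = degree P in
     (\<i> ^ gf2_to_nat (alpha P v i i)) \<cdot>\<^sub>m
       (Xq n i * foldr (\<lambda>j M. (Zq n j ^\<^sub>m gf2_to_nat (alpha P v i j)) * M) [0..<n] (1\<^sub>m (2^n))))"

definition unitary_mat :: "nat \<Rightarrow> complex mat \<Rightarrow> bool" where
  "unitary_mat n U \<longleftrightarrow> U \<in> carrier_mat (2^n) (2^n) \<and>
     mat_adjoint U * U = 1\<^sub>m (2^n) \<and> U * mat_adjoint U = 1\<^sub>m (2^n)"

definition clifford :: "nat \<Rightarrow> complex mat \<Rightarrow> bool" where
  "clifford n U \<longleftrightarrow> unitary_mat n U \<and>
     (\<forall>P \<in> Paulis n. \<exists>Q \<in> Paulis n. \<exists>s \<in> {1, -1, \<i>, -\<i>}. U * P * mat_adjoint U = s \<cdot>\<^sub>m Q)"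

definition hermitian_mat :: "nat \<Rightarrow> complex mat \<Rightarrow> bool" where
  "hermitian_mat n A \<longleftrightarrow> A \<in> carrier_mat (2^n) (2^n) \<and> mat_adjoint A = A"

definition density_mat :: "nat \<Rightarrow> complex mat \<Rightarrow> bool" where
  "density_mat n \<rho> \<longleftrightarrow> hermitian_mat n \<rho> \<and> trace \<rho> = 1 \<and>
     (\<forall>v \<in> carrier_vec (2^n). 0 \<le> Re ((\<rho> *\<^sub>v v) \<bullet>c v))"

text \<open>Index set of E_MUB: None is the identity, Some v is U_v, v < 2^n.\<close>
definition Idx :: "nat \<Rightarrow> nat option set" where
  "Idx n = insert None (Some ` {..<2^n})"

definition ens :: "nat \<Rightarrow> (nat \<Rightarrow> complex mat) \<Rightarrow> nat option \<Rightarrow> complex mat" where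
  "ens n U k = (case k of None \<Rightarrow> 1\<^sub>m (2^n) | Some v \<Rightarrow> U v)"

definition proj :: "nat \<Rightarrow> nat \<Rightarrow> complex mat" where
  "proj n b = mat (2^n) (2^n) (\<lambda>(r, c). if r = b \<and> c = b then 1 else 0)"

definition Phi :: "nat \<Rightarrow> complex mat \<Rightarrow> nat \<Rightarrow> complex mat" where
  "Phi n W b = mat_adjoint W * proj n b * W"

definition traceless :: "nat \<Rightarrow> complex mat \<Rightarrow> complex mat" where
  "traceless n Ob = Ob - (trace Ob / 2^n) \<cdot>\<^sub>m 1\<^sub>m (2^n)"

definition Bval :: "nat \<Rightarrow> complex mat \<Rightarrow> complex mat \<Rightarrow> real" where
  "Bval n Ob W = Max ((\<lambda>b. cmod (trace (Phi n W b * traceless n Ob))) ` {..<2^n})"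

definition Bsum :: "nat \<Rightarrow> (nat \<Rightarrow> complex mat) \<Rightarrow> complex mat \<Rightarrow> real" where
  "Bsum n U Ob = (\<Sum>k\<in>Idx n. Bval n Ob (ens n U k))"

definition pU :: "nat \<Rightarrow> (nat \<Rightarrow> complex mat) \<Rightarrow> complex mat \<Rightarrow> nat option \<Rightarrow> real" where
  "pU n U Ob k = Bval n Ob (ens n U k) / Bsum n U Ob"

definition prob :: "nat \<Rightarrow> (nat \<Rightarrow> complex mat) \<Rightarrow> complex mat \<Rightarrow> complex mat
                      \<Rightarrow> nat option \<Rightarrow> nat \<Rightarrow> real" where
  "prob n U Ob \<rho> k b = pU n U Ob k *
     Re ((ens n U k * \<rho> * mat_adjoint (ens n U k)) $$ (b, b))"

text \<open>Estimator output; the traces are real for Hermitian Ob, we take the real part.\<close>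
definition est :: "nat \<Rightarrow> (nat \<Rightarrow> complex mat) \<Rightarrow> complex mat \<Rightarrow> nat option \<Rightarrow> nat \<Rightarrow> real" where
  "est n U Ob k b = Re (trace (traceless n Ob * Phi n (ens n U k) b)) / pU n U Ob k
                   + Re (trace Ob) / 2^n"

text \<open>Sample space: unitaries with p_U = 0 are never sampled.\<close>
definition outcomes :: "nat \<Rightarrow> (nat \<Rightarrow> complex mat) \<Rightarrow> complex mat \<Rightarrow> (nat option \<times> nat) set" where
  "outcomes n U Ob = {k \<in> Idx n. pU n U Ob k > 0} \<times> {..<2^n}"

definition est_mean :: "nat \<Rightarrow> (nat \<Rightarrow> complex mat) \<Rightarrow> complex mat \<Rightarrow> complex mat \<Rightarrow> real" where
  "est_mean n U Ob \<rho> = (\<Sum>(k, b)\<in>outcomes n U Ob. prob n U Ob \<rho> k b * est n U Ob k b)"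

definition est_var :: "nat \<Rightarrow> (nat \<Rightarrow> complex mat) \<Rightarrow> complex mat \<Rightarrow> complex mat \<Rightarrow> real" where
  "est_var n U Ob \<rho> = (\<Sum>(k, b)\<in>outcomes n U Ob.
      prob n U Ob \<rho> k b * (est n U Ob k b - est_mean n U Ob \<rho>)^2)"

definition stab_norm :: "nat \<Rightarrow> complex mat \<Rightarrow> real" where
  "stab_norm n A = (\<Sum>Q\<in>Paulis n. cmod (trace (Q * A))) / 2^n"

end

theory Submission
  imports Defs
begin

(* For a unitary W of the ensemble, tr(Phi_{W,b} O0) is the
   b-th diagonal entry of W O0 W^dagger, and expanding a diagonal in the characters (-1)^(b.z) of
   GF(2)^n gives |tr(Phi_{W,b} O0)| <= 2^-n sum_{z /= 0} |tr(W^dagger Z^z W O0)|; the term z = 0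
   vanishes because O0 is traceless.  Each W^dagger Z^z W is a phase times a Pauli string: Z^z for
   the identity, and X^z Z^(f_v z) for U_v, where f_v is GF(2)-linear with j-th bit the constant
   coefficient of v(x) z(x) x^j mod P_n.  Irreducibility of P_n makes this trace form
   nondegenerate, so z /= 0 and f_v z = f_v' z force v = v'.  Hence different members of the
   ensemble meet disjoint sets of Pauli strings, and summing the bounds gives
   sum_U B_U <= D(O0).  The variance bound holds because every value of the estimator lies within
   sum_U B_U of tr(O)/2^n. *)

lemma gf2_cases: "(x::gf2) = 0 \<or> x = 1"
proof -
  have "{0, 1} = (UNIV::gf2 set)"
    by (rule card_subset_eq) simp_all
  then show ?thesis by auto
qed

lemma gf2_two_eq_zero: "(2::gf2) = 0"
  using gf2_cases[of 2] by (metis add_cancel_right_right one_add_one zero_neq_one)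

lemma gf2_to_nat_eq_1_iff: "gf2_to_nat x = 1 \<longleftrightarrow> x = 1"
  unfolding gf2_to_nat_def by auto

definition gf2_bit :: "nat \<Rightarrow> nat \<Rightarrow> gf2" where
  "gf2_bit w k = (if bit w k then 1 else 0)"

lemma gf2_bit_xor: "gf2_bit (xor a b) k = gf2_bit a k + gf2_bit b k"
  unfolding gf2_bit_def by (auto simp: bit_xor_iff gf2_two_eq_zero)

lemma not_bit_if_less_exp: "(a::nat) < 2^n \<Longrightarrow> n \<le> k \<Longrightarrow> \<not> bit a k"
  by (metis bit_take_bit_iff leD take_bit_nat_eq_self_iff)

lemma nat_eq_if_low_bits_eq:
  assumes "(a::nat) < 2^n" and "b < 2^n" and "\<And>k. k < n \<Longrightarrow> bit a k = bit b k"
  shows "a = b"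
  by (rule bit_eqI) (metis assms not_bit_if_less_exp not_less)

lemma xor_less_exp: "(a::nat) < 2^n \<Longrightarrow> b < 2^n \<Longrightarrow> xor a b < 2^n"
  by (metis take_bit_nat_eq_self_iff take_bit_xor)

lemma take_bit_Suc_eq_xor:
  "take_bit (Suc m) (z::nat) = (if bit z m then xor (take_bit m z) (2^m) else take_bit m z)"
proof -
  have "and (take_bit m z) (2^m) = 0"
    by (rule bit_eqI) (auto simp: bit_and_iff bit_take_bit_iff bit_exp_iff)
  then have "take_bit m z + 2^m = xor (take_bit m z) (2^m)"
    by (rule disjunctive_add_eq_xor)
  then show ?thesis by (simp add: take_bit_Suc_from_most)
qed

lemma bit_foldr_xor_exp:
  "distinct js \<Longrightarrow>
   bit (foldr (\<lambda>j acc. if g j then xor (2^j) acc else (acc::nat)) js 0) k \<longleftrightarrow> k \<in> set js \<and> g k"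
  by (induction js) (auto simp: bit_xor_iff bit_exp_iff)

lemma foldr_xor_exp_less_exp:
  "\<forall>j\<in>set js. j < n \<Longrightarrow> foldr (\<lambda>j acc. if g j then xor (2^j) acc else (acc::nat)) js 0 < 2^n"
  by (induction js) (auto intro!: xor_less_exp)

fun xor_comb :: "(nat \<Rightarrow> nat) \<Rightarrow> nat \<Rightarrow> nat \<Rightarrow> nat" where
  "xor_comb a 0 z = 0"
| "xor_comb a (Suc m) z = (if bit z m then xor (xor_comb a m z) (a m) else xor_comb a m z)"

lemma gf2_bit_xor_comb: "gf2_bit (xor_comb a m z) k = (\<Sum>i<m. gf2_bit z i * gf2_bit (a i) k)"
  by (induction m) (simp_all add: gf2_bit_xor gf2_bit_def[of z] gf2_bit_def[of 0])

lemma xor_comb_less_exp: "(\<And>i. a i < 2^n) \<Longrightarrow> xor_comb a m z < 2^n"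
  by (induction m) (auto simp: xor_less_exp)

definition overlap :: "nat \<Rightarrow> nat \<Rightarrow> nat \<Rightarrow> nat" where
  "overlap n a z = card {k. k < n \<and> bit a k \<and> bit z k}"

lemma overlap_commute: "overlap n a z = overlap n z a"
  unfolding overlap_def by (rule arg_cong[where f = card]) blast

lemma overlap_zero [simp]: "overlap n 0 z = 0" "overlap n z 0 = 0"
  unfolding overlap_def by auto

lemma overlap_exp: "j < n \<Longrightarrow> overlap n (2^j) w = (if bit w j then 1 else 0)"
proof -
  assume "j < n"
  then have "{k. k < n \<and> bit ((2::nat)^j) k \<and> bit w k} = (if bit w j then {j} else {})"
    by (auto simp: bit_exp_iff)
  then show ?thesis unfolding overlap_def by simp
qed

lemma sign_overlap_xor_left:
  "(-1::complex) ^ overlap n (xor a b) z = (-1) ^ overlap n a z * (-1) ^ overlap n b z"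
proof -
  define A where "A = {k. k < n \<and> bit a k \<and> bit z k}"
  define B where "B = {k. k < n \<and> bit b k \<and> bit z k}"
  define X where "X = {k. k < n \<and> bit (xor a b) k \<and> bit z k}"
  have fin: "finite A" "finite B" "finite X" unfolding A_def B_def X_def by auto
  have "A \<union> B = X \<union> (A \<inter> B)" and "X \<inter> (A \<inter> B) = {}"
    unfolding A_def B_def X_def by (auto simp: bit_xor_iff)
  then have "card A + card B = card X + 2 * card (A \<inter> B)"
    using fin card_Un_Int[of A B] by (simp add: card_Un_disjoint)
  then have "(-1::complex) ^ card A * (-1) ^ card B = (-1) ^ (card X + 2 * card (A \<inter> B))"
    by (simp add: power_add[symmetric])
  also have "\<dots> = (-1) ^ card X" by (simp add: power_add power_mult)
  finally show ?thesis unfolding overlap_def A_def B_def X_def by simp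
qed

lemma sign_overlap_xor_right:
  "(-1::complex) ^ overlap n z (xor a b) = (-1) ^ overlap n z a * (-1) ^ overlap n z b"
  using sign_overlap_xor_left[of n a b z] by (simp add: overlap_commute)

lemma sum_sign_overlap:
  "(\<Sum>z<2^n. (-1::complex) ^ overlap n d z) = (if \<forall>k<n. \<not> bit d k then 2^n else 0)"
proof (cases "\<forall>k<n. \<not> bit d k")
  case True
  then have "\<And>z. overlap n d z = 0" unfolding overlap_def by auto
  then show ?thesis using True by simp
next
  case False
  then obtain j where j: "j < n" "bit d j" by auto
  have jl: "(2::nat)^j < 2^n" using j by simp
  have dj: "overlap n d (2^j) = 1" using j by (simp add: overlap_commute[of n d] overlap_exp)
  define S where "S = (\<Sum>z<2^n. (-1::complex) ^ overlap n d z)"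
  \<comment> \<open>flipping bit j of z is a bijection that flips the sign of every term\<close>
  have "(\<Sum>z<2^n. - ((-1::complex) ^ overlap n d z)) = S"
    unfolding S_def
    by (rule sum.reindex_bij_witness[of _ "\<lambda>z. xor z (2^j)" "\<lambda>z. xor z (2^j)"])
      (use jl in \<open>auto simp: xor.assoc xor_less_exp sign_overlap_xor_right dj\<close>)
  then have "S = 0" by (simp add: sum_negf S_def)
  then show ?thesis using False S_def by simp
qed

lemma adjoint_dims [simp]:
  "dim_row (mat_adjoint A) = dim_col A" "dim_col (mat_adjoint A) = dim_row A"
  unfolding mat_adjoint_def by auto

lemma adjoint_index [simp]:
  "i < dim_col A \<Longrightarrow> j < dim_row A \<Longrightarrow> mat_adjoint A $$ (i, j) = cnj (A $$ (j, i))"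
  unfolding mat_adjoint_def by (simp add: mat_of_rows_index)

lemma adjoint_one [simp]: "mat_adjoint (1\<^sub>m n) = (1\<^sub>m n :: complex mat)"
  by (rule eq_matI) auto

lemma smult_one_mat [simp]: "(1::'a::ring_1) \<cdot>\<^sub>m A = A"
  by (rule eq_matI) auto

lemma smult_smult_mat: "(a::'a::comm_ring) \<cdot>\<^sub>m (b \<cdot>\<^sub>m A) = (a * b) \<cdot>\<^sub>m A"
  by (rule eq_matI) (auto simp: mult.assoc)

lemma uminus_smult_mat: "- (c \<cdot>\<^sub>m (A::complex mat)) = (- c) \<cdot>\<^sub>m A"
  by (rule eq_matI) auto

lemma trace_mult_comm:
  assumes "A \<in> carrier_mat n m" and "B \<in> carrier_mat m n"
  shows "trace (A * B) = trace (B * A)"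
proof -
  have "trace (A * B) = (\<Sum>i<n. \<Sum>j<m. A $$ (i, j) * B $$ (j, i))"
    using assms unfolding trace_def by (simp add: scalar_prod_def atLeast0LessThan)
  also have "\<dots> = (\<Sum>j<m. \<Sum>i<n. B $$ (j, i) * A $$ (i, j))"
    by (subst sum.swap) (simp add: mult.commute)
  also have "\<dots> = trace (B * A)"
    using assms unfolding trace_def by (simp add: scalar_prod_def atLeast0LessThan)
  finally show ?thesis .
qed

lemma trace_smult: "A \<in> carrier_mat k k \<Longrightarrow> trace (c \<cdot>\<^sub>m A) = c * trace A"
  unfolding trace_def by (simp add: sum_distrib_left)

lemma trace_traceless: "Ob \<in> carrier_mat (2^n) (2^n) \<Longrightarrow> trace (traceless n Ob) = 0"
  unfolding traceless_def trace_def by (simp add: sum_subtractf)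

lemma traceless_carrier: "Ob \<in> carrier_mat (2^n) (2^n) \<Longrightarrow> traceless n Ob \<in> carrier_mat (2^n) (2^n)"
  unfolding traceless_def by auto

lemma trace_conj_mult:
  fixes W A B :: "complex mat"
  assumes W: "W \<in> carrier_mat N N" and A: "A \<in> carrier_mat N N" and B: "B \<in> carrier_mat N N"
  shows "trace (mat_adjoint W * A * W * B) = trace (A * (W * B * mat_adjoint W))"
proof -
  have Wa: "mat_adjoint W \<in> carrier_mat N N" using W by auto
  have "trace (mat_adjoint W * A * W * B) = trace (mat_adjoint W * (A * W * B))"
    using W Wa A B by (simp add: assoc_mult_mat[of _ N N _ N _ N])
  also have "\<dots> = trace ((A * W * B) * mat_adjoint W)"
    by (rule trace_mult_comm[of _ N N]) (use W Wa A B in auto)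
  also have "\<dots> = trace (A * (W * B * mat_adjoint W))"
    using W Wa A B by (simp add: assoc_mult_mat[of _ N N _ N _ N])
  finally show ?thesis .
qed

lemma conj_mult:
  assumes W: "W \<in> carrier_mat N N" and A: "A \<in> carrier_mat N N" and B: "B \<in> carrier_mat N N"
    and u: "W * mat_adjoint W = 1\<^sub>m N"
  shows "mat_adjoint W * (A * B) * W = (mat_adjoint W * A * W) * (mat_adjoint W * B * W)"
proof -
  have Wa: "mat_adjoint W \<in> carrier_mat N N" using W by auto
  have "(mat_adjoint W * A * W) * (mat_adjoint W * B * W)
      = mat_adjoint W * A * (W * mat_adjoint W) * B * W"
    using W Wa A B by (simp add: assoc_mult_mat[of _ N N _ N _ N])
  then show ?thesis
    using W Wa A B u by (simp add: assoc_mult_mat[of _ N N _ N _ N])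
qed

lemma trace_unitary_conj:
  assumes W: "unitary_mat n W" and R: "R \<in> carrier_mat (2^n) (2^n)"
  shows "trace (W * R * mat_adjoint W) = trace R"
proof -
  have Wc: "W \<in> carrier_mat (2^n) (2^n)" and u: "mat_adjoint W * W = 1\<^sub>m (2^n)"
    using W unfolding unitary_mat_def by auto
  have Wa: "mat_adjoint W \<in> carrier_mat (2^n) (2^n)" using Wc by auto
  have "trace (W * R * mat_adjoint W) = trace (mat_adjoint W * (W * R))"
    by (rule trace_mult_comm[of _ "2^n" "2^n"]) (use Wc R in auto)
  also have "mat_adjoint W * (W * R) = mat_adjoint W * W * R"
    using assoc_mult_mat[OF Wa Wc R] by simp
  finally show ?thesis using u R by simp
qed

lemma diag_conj_eq_quadratic_form:
  fixes W R :: "complex mat"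
  assumes W: "W \<in> carrier_mat N N" and R: "R \<in> carrier_mat N N" and b: "b < N"
  shows "(W * R * mat_adjoint W) $$ (b, b) = (R *\<^sub>v col (mat_adjoint W) b) \<bullet>c col (mat_adjoint W) b"
proof -
  have "(W * R * mat_adjoint W) $$ (b, b)
      = (\<Sum>j<N. (\<Sum>i<N. W $$ (b, i) * R $$ (i, j)) * cnj (W $$ (b, j)))"
    using W R b by (simp add: scalar_prod_def atLeast0LessThan)
  also have "\<dots> = (\<Sum>i<N. \<Sum>j<N. W $$ (b, i) * R $$ (i, j) * cnj (W $$ (b, j)))"
    by (subst sum.swap) (simp add: sum_distrib_right)
  also have "\<dots> = (\<Sum>i<N. (\<Sum>j<N. R $$ (i, j) * cnj (W $$ (b, j))) * W $$ (b, i))"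
    by (simp add: sum_distrib_left sum_distrib_right mult_ac)
  also have "\<dots> = (R *\<^sub>v col (mat_adjoint W) b) \<bullet>c col (mat_adjoint W) b"
    using W R b by (simp add: scalar_prod_def atLeast0LessThan)
  finally show ?thesis .
qed

lemma proj_carrier [simp]: "proj n b \<in> carrier_mat (2^n) (2^n)"
  unfolding proj_def by auto

lemma trace_proj_mult:
  assumes M: "M \<in> carrier_mat (2^n) (2^n)" and b: "b < 2^n"
  shows "trace (proj n b * M) = M $$ (b, b)"
proof -
  have "(proj n b * M) $$ (i, i) = (if i = b then M $$ (b, b) else 0)" if i: "i < 2^n" for i
  proof -
    have "(proj n b * M) $$ (i, i) = (\<Sum>m<2^n. proj n b $$ (i, m) * M $$ (m, i))"
      using M i by (simp add: proj_def scalar_prod_def atLeast0LessThan)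
    also have "\<dots> = (\<Sum>m<2^n. if m = b \<and> i = b then M $$ (b, b) else 0)"
      by (rule sum.cong) (use i in \<open>auto simp: proj_def\<close>)
    finally show ?thesis using b by simp
  qed
  then have "trace (proj n b * M) = (\<Sum>i<2^n. if i = b then M $$ (b, b) else 0)"
    unfolding trace_def by (simp add: proj_def)
  then show ?thesis using b by simp
qed

section \<open>Pauli strings\<close>

lemma XZ_carrier [simp]: "XZ n x z \<in> carrier_mat (2^n) (2^n)"
  unfolding XZ_def by auto

lemma XZ_dims [simp]: "dim_row (XZ n x z) = 2^n" "dim_col (XZ n x z) = 2^n"
  unfolding XZ_def by auto

lemma XZ_index:
  "r < 2^n \<Longrightarrow> c < 2^n \<Longrightarrow>
   XZ n x z $$ (r, c) = (if r = xor c x then (-1) ^ overlap n c z else 0)"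
  unfolding XZ_def overlap_def by auto

lemma XZ_zero: "XZ n 0 0 = 1\<^sub>m (2^n)"
  by (rule eq_matI) (auto simp: XZ_index)

lemma XZ_mult:
  assumes "x' < 2^n"
  shows "XZ n x z * XZ n x' z' = (-1) ^ overlap n x' z \<cdot>\<^sub>m XZ n (xor x x') (xor z z')"
proof (rule eq_matI)
  fix r c assume "r < dim_row ((-1) ^ overlap n x' z \<cdot>\<^sub>m XZ n (xor x x') (xor z z'))"
    and "c < dim_col ((-1) ^ overlap n x' z \<cdot>\<^sub>m XZ n (xor x x') (xor z z'))"
  then have r: "r < 2^n" and c: "c < 2^n" by auto
  have cx: "xor c x' < 2^n" using xor_less_exp[OF c assms] .
  have "(XZ n x z * XZ n x' z') $$ (r, c) = (\<Sum>m<2^n. XZ n x z $$ (r, m) * XZ n x' z' $$ (m, c))"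
    using r c by (simp add: scalar_prod_def atLeast0LessThan)
  also have "\<dots> = (\<Sum>m<2^n. if m = xor c x' then XZ n x z $$ (r, m) * (-1) ^ overlap n c z' else 0)"
    by (rule sum.cong) (auto simp: XZ_index c)
  also have "\<dots> = XZ n x z $$ (r, xor c x') * (-1) ^ overlap n c z'"
    using cx by simp
  also have "\<dots> = ((-1) ^ overlap n x' z \<cdot>\<^sub>m XZ n (xor x x') (xor z z')) $$ (r, c)"
    using r c cx
    by (auto simp: XZ_index sign_overlap_xor_left sign_overlap_xor_right xor.assoc xor.commute
        xor.left_commute)
  finally show "(XZ n x z * XZ n x' z') $$ (r, c)
    = ((-1) ^ overlap n x' z \<cdot>\<^sub>m XZ n (xor x x') (xor z z')) $$ (r, c)" .
qed auto

lemma pauli_eq_XZ: "pauli n x z = (\<i> ^ overlap n x z) \<cdot>\<^sub>m XZ n x z"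
  unfolding pauli_def overlap_def by simp

lemma XZ_eq_pauli: "XZ n x z = ((-\<i>) ^ overlap n x z) \<cdot>\<^sub>m pauli n x z"
proof -
  have "(-\<i>) ^ k * \<i> ^ k = (-\<i> * \<i>) ^ k" for k :: nat
    by (rule power_mult_distrib[symmetric])
  then have "(-\<i>) ^ k * \<i> ^ k = 1" for k :: nat
    by simp
  then show ?thesis by (simp add: pauli_eq_XZ smult_smult_mat)
qed

lemma Zq_eq_XZ: "Zq n j = XZ n 0 (2^j)"
  unfolding Zq_def pauli_eq_XZ by simp

lemma Xq_eq_XZ: "Xq n j = XZ n (2^j) 0"
  unfolding Xq_def pauli_eq_XZ by simp

lemma pauli_index:
  "r < 2^n \<Longrightarrow> c < 2^n \<Longrightarrow>
   pauli n x z $$ (r, c) = \<i> ^ overlap n x z * (if r = xor c x then (-1) ^ overlap n c z else 0)"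
  unfolding pauli_eq_XZ by (simp add: XZ_index)

lemma pauli_inj:
  assumes x: "x < 2^n" and x': "x' < 2^n" and z: "z < 2^n" and z': "z' < 2^n"
    and eq: "pauli n x z = pauli n x' z'"
  shows "x = x' \<and> z = z'"
proof -
  have e0: "pauli n x z $$ (x, 0) = pauli n x' z' $$ (x, 0)" using eq by simp
  then have xx: "x = x'" using x by (cases "x = x'") (auto simp: pauli_index)
  then have phase: "\<i> ^ overlap n x z = \<i> ^ overlap n x z'" using e0 x by (simp add: pauli_index)
  have "bit z j = bit z' j" if j: "j < n" for j
  proof -
    have jl: "(2::nat)^j < 2^n" using j by simp
    have "pauli n x z $$ (xor (2^j) x, 2^j) = pauli n x' z' $$ (xor (2^j) x, 2^j)"
      using eq by simp
    then have "(-1::complex) ^ overlap n (2^j) z = (-1) ^ overlap n (2^j) z'"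
      using xor_less_exp[OF jl x] jl xx phase by (simp add: pauli_index)
    then show ?thesis using j by (auto simp: overlap_exp split: if_splits)
  qed
  then show ?thesis using xx nat_eq_if_low_bits_eq[OF z z'] by blast
qed

lemma sum_Paulis:
  "(\<Sum>Q\<in>Paulis n. f Q) = (\<Sum>p\<in>{..<2^n} \<times> {..<2^n}. f (case_prod (pauli n) p))"
proof -
  have "Paulis n = case_prod (pauli n) ` ({..<2^n} \<times> {..<2^n})"
    unfolding Paulis_def by force
  moreover have "inj_on (case_prod (pauli n)) ({..<2^n} \<times> {..<2^n})"
    by (rule inj_onI) (use pauli_inj in \<open>auto simp: prod_eq_iff\<close>)
  ultimately show ?thesis by (simp add: sum.reindex)
qed

lemma trace_Z_mult:
  assumes M: "M \<in> carrier_mat (2^n) (2^n)"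
  shows "trace (XZ n 0 z * M) = (\<Sum>c<2^n. (-1) ^ overlap n c z * M $$ (c, c))"
  unfolding trace_def
proof (rule sum.cong)
  fix i :: nat assume i: "i \<in> {..<2^n}"
  have "(XZ n 0 z * M) $$ (i, i) = (\<Sum>m<2^n. XZ n 0 z $$ (i, m) * M $$ (m, i))"
    using M i by (simp add: scalar_prod_def atLeast0LessThan)
  also have "\<dots> = (\<Sum>m<2^n. if m = i then (-1) ^ overlap n i z * M $$ (i, i) else 0)"
    by (rule sum.cong) (use i in \<open>auto simp: XZ_index\<close>)
  finally show "(XZ n 0 z * M) $$ (i, i) = (-1) ^ overlap n i z * M $$ (i, i)"
    using i by simp
qed (use M in simp)

lemma diag_eq_Z_fourier:
  assumes M: "M \<in> carrier_mat (2^n) (2^n)" and b: "b < 2^n"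
  shows "M $$ (b, b) = (\<Sum>z<2^n. (-1) ^ overlap n b z * trace (XZ n 0 z * M)) / 2^n"
proof -
  have "(\<Sum>z<2^n. (-1) ^ overlap n b z * trace (XZ n 0 z * M))
      = (\<Sum>z<(2::nat)^n. \<Sum>c<(2::nat)^n. (-1) ^ overlap n (xor b c) z * M $$ (c, c))"
    by (simp add: trace_Z_mult[OF M] sum_distrib_left sign_overlap_xor_left mult.assoc)
  also have "\<dots> = (\<Sum>c<(2::nat)^n. M $$ (c, c) * (\<Sum>z<(2::nat)^n. (-1) ^ overlap n (xor b c) z))"
    by (subst sum.swap) (simp add: sum_distrib_left mult.commute)
  also have "\<dots> = (\<Sum>c<(2::nat)^n. if c = b then M $$ (b, b) * 2^n else 0)"
  proof (rule sum.cong)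
    fix c assume "c \<in> {..<(2::nat)^n}"
    then have "(\<forall>k<n. \<not> bit (xor b c) k) \<longleftrightarrow> c = b"
      using b nat_eq_if_low_bits_eq[of b n c] by (auto simp: bit_xor_iff)
    then show "M $$ (c, c) * (\<Sum>z<(2::nat)^n. (-1) ^ overlap n (xor b c) z)
      = (if c = b then M $$ (b, b) * 2^n else 0)"
      by (simp add: sum_sign_overlap)
  qed simp
  finally show ?thesis using b by simp
qed

lemma diag_le_sum_trace_Z:
  assumes M: "M \<in> carrier_mat (2^n) (2^n)" and b: "b < 2^n"
  shows "cmod (M $$ (b, b)) \<le> (\<Sum>z<2^n. cmod (trace (XZ n 0 z * M))) / 2^n"
proof -
  have "cmod (\<Sum>z<2^n. (-1) ^ overlap n b z * trace (XZ n 0 z * M))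
      \<le> (\<Sum>z<(2::nat)^n. cmod (trace (XZ n 0 z * M)))"
    by (rule order_trans[OF norm_sum]) (simp add: norm_mult norm_power)
  then show ?thesis
    by (subst diag_eq_Z_fourier[OF M b]) (simp add: norm_divide norm_power divide_right_mono)
qed

lemma trace_Phi_le_sum_conj_Z:
  assumes W: "unitary_mat n W"
    and O: "O0 \<in> carrier_mat (2^n) (2^n)" and t0: "trace O0 = 0"
    and Q: "\<And>z. z < 2^n \<Longrightarrow> \<exists>d. cmod d = 1 \<and> mat_adjoint W * XZ n 0 z * W = d \<cdot>\<^sub>m Q z"
    and b: "b < 2^n"
  shows "cmod (trace (Phi n W b * O0)) \<le> (\<Sum>z\<in>{1..<2^n}. cmod (trace (Q z * O0))) / 2^n"
proof -
  have Wc: "W \<in> carrier_mat (2^n) (2^n)" and u: "mat_adjoint W * W = 1\<^sub>m (2^n)"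
    using W unfolding unitary_mat_def by auto
  define M where "M = W * O0 * mat_adjoint W"
  have Mc: "M \<in> carrier_mat (2^n) (2^n)" unfolding M_def using Wc O by auto
  have conj: "trace (XZ n 0 z * M) = trace (mat_adjoint W * XZ n 0 z * W * O0)" for z
    unfolding M_def by (rule trace_conj_mult[symmetric]) (use Wc O in auto)
  have "trace (Phi n W b * O0) = M $$ (b, b)"
    unfolding Phi_def M_def
    using trace_conj_mult[OF Wc proj_carrier O] trace_proj_mult[OF Mc[unfolded M_def] b] by simp
  then have "cmod (trace (Phi n W b * O0)) \<le> (\<Sum>z<2^n. cmod (trace (XZ n 0 z * M))) / 2^n"
    using diag_le_sum_trace_Z[OF Mc b] by simp
  also have "(\<Sum>z<(2::nat)^n. cmod (trace (XZ n 0 z * M)))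
      = (\<Sum>z\<in>{1..<2^n}. cmod (trace (XZ n 0 z * M)))"
  proof -
    have "trace (XZ n 0 0 * M) = 0"
      using conj[of 0] Wc u O t0 by (simp add: XZ_zero)
    moreover have "{..<(2::nat)^n} = insert 0 {1..<2^n}" by auto
    ultimately show ?thesis by simp
  qed
  also have "\<dots> = (\<Sum>z\<in>{1..<2^n}. cmod (trace (Q z * O0)))"
  proof (rule sum.cong)
    fix z assume "z \<in> {1..<(2::nat)^n}"
    then obtain d where d: "cmod d = 1" and e: "mat_adjoint W * XZ n 0 z * W = d \<cdot>\<^sub>m Q z"
      using Q by auto
    have "Q z \<in> carrier_mat (2^n) (2^n)"
      using arg_cong[OF e, of dim_row] arg_cong[OF e, of dim_col] Wc by auto
    then have "trace (XZ n 0 z * M) = d * trace (Q z * O0)"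
      using conj[of z] e O
      by (simp add: mult_smult_assoc_mat[of _ "2^n" "2^n" _ "2^n"] trace_smult[of _ "2^n"])
    then show "cmod (trace (XZ n 0 z * M)) = cmod (trace (Q z * O0))"
      using d by (simp add: norm_mult)
  qed simp
  finally show ?thesis by (simp add: divide_right_mono)
qed

section \<open>Conjugating Z-strings by a Clifford unitary\<close>

lemma conj_Z_take_bit:
  assumes W: "unitary_mat n W"
    and a: "\<And>i. i < n \<Longrightarrow>
      \<exists>c. cmod c = 1 \<and> mat_adjoint W * XZ n 0 (2^i) * W = c \<cdot>\<^sub>m XZ n (2^i) (a i)"
    and "m \<le> n"
  shows "\<exists>d. cmod d = 1 \<and>
    mat_adjoint W * XZ n 0 (take_bit m z) * W = d \<cdot>\<^sub>m XZ n (take_bit m z) (xor_comb a m z)"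
proof -
  have Wc: "W \<in> carrier_mat (2^n) (2^n)" and u1: "W * mat_adjoint W = 1\<^sub>m (2^n)"
    and u2: "mat_adjoint W * W = 1\<^sub>m (2^n)"
    using W unfolding unitary_mat_def by auto
  from \<open>m \<le> n\<close> show ?thesis
  proof (induction m)
    case 0
    show ?case using Wc u2 by (intro exI[of _ 1]) (simp add: XZ_zero)
  next
    case (Suc m)
    then obtain d where d: "cmod d = 1" and e:
      "mat_adjoint W * XZ n 0 (take_bit m z) * W = d \<cdot>\<^sub>m XZ n (take_bit m z) (xor_comb a m z)"
      by auto
    show ?case
    proof (cases "bit z m")
      case False
      then show ?thesis using d e by (auto simp: take_bit_Suc_eq_xor)
    next
      case True
      obtain c where c: "cmod c = 1"
        and ec: "mat_adjoint W * XZ n 0 (2^m) * W = c \<cdot>\<^sub>m XZ n (2^m) (a m)"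
        using a[of m] Suc.prems by auto
      have m2: "(2::nat)^m < 2^n" using Suc.prems by simp
      let ?s = "(-1) ^ overlap n (2^m) (xor_comb a m z)"
      have "XZ n 0 (take_bit (Suc m) z) = XZ n 0 (take_bit m z) * XZ n 0 (2^m)"
        using True m2 by (simp add: take_bit_Suc_eq_xor XZ_mult)
      then have "mat_adjoint W * XZ n 0 (take_bit (Suc m) z) * W
        = (d \<cdot>\<^sub>m XZ n (take_bit m z) (xor_comb a m z)) * (c \<cdot>\<^sub>m XZ n (2^m) (a m))"
        using conj_mult[OF Wc _ _ u1] e ec by simp
      also have "\<dots> = (c * d) \<cdot>\<^sub>m (XZ n (take_bit m z) (xor_comb a m z) * XZ n (2^m) (a m))"
        by (simp add: mult_smult_assoc_mat[of _ "2^n" "2^n" _ "2^n"]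
            mult_smult_distrib[of _ "2^n" "2^n" _ "2^n"] smult_smult_mat)
      also have "\<dots> = (c * d * ?s) \<cdot>\<^sub>m XZ n (take_bit (Suc m) z) (xor_comb a (Suc m) z)"
        using True m2 by (simp add: XZ_mult take_bit_Suc_eq_xor smult_smult_mat)
      finally show ?thesis using c d
        by (intro exI[of _ "c * d * ?s"]) (simp add: norm_mult norm_power)
    qed
  qed
qed

section \<open>The trace form of GF(2)[x]/(P)\<close>

lemma degree_pos_if_irreducible:
  assumes "irreducible (P::'a::field poly)"
  shows "0 < degree P"
proof (rule ccontr)
  assume "\<not> 0 < degree P"
  moreover have "P \<noteq> 0" using assms by auto
  ultimately have "is_unit P" using is_unit_iff_degree by blast
  then show False using assms by (auto simp: irreducible_def)
qed

definition const_coeff_mod :: "'a::field poly \<Rightarrow> 'a poly \<Rightarrow> 'a" where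
  "const_coeff_mod P f = coeff (f mod P) 0"

lemma const_coeff_mod_sum: "const_coeff_mod P (\<Sum>i\<in>A. f i) = (\<Sum>i\<in>A. const_coeff_mod P (f i))"
proof -
  have "(\<Sum>i\<in>A. f i) mod P = (\<Sum>i\<in>A. f i mod P)"
    by (induction A rule: infinite_finite_induct) (simp_all add: poly_mod_add_left)
  then show ?thesis unfolding const_coeff_mod_def by (simp add: coeff_sum)
qed

lemma const_coeff_mod_smult: "const_coeff_mod P (smult c f) = c * const_coeff_mod P f"
  unfolding const_coeff_mod_def by (simp add: mod_smult_left)

lemma const_coeff_mod_diff:
  "const_coeff_mod P (f - g) = const_coeff_mod P f - const_coeff_mod P g"
  unfolding const_coeff_mod_def by (simp add: poly_mod_diff_left)

lemma poly_eq_sum_monoms: "degree r < n \<Longrightarrow> r = (\<Sum>p<n. monom (coeff r p) p)"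
  by (rule poly_eqI) (auto simp: coeff_sum coeff_eq_0)

lemma dvd_if_const_coeff_mod_mult_monom_eq_0:
  fixes P r :: "'a::field_gcd poly"
  assumes irr: "irreducible P"
    and h: "\<And>j. j < degree P \<Longrightarrow> const_coeff_mod P (r * monom 1 j) = 0"
  shows "P dvd r"
proof (rule ccontr)
  assume ndvd: "\<not> P dvd r"
  have P0: "P \<noteq> 0" using irr by auto
  have all: "const_coeff_mod P (r * q) = 0" for q
  proof -
    have deg: "degree (q mod P) < degree P"
      using degree_mod_less'[OF P0] degree_pos_if_irreducible[OF irr] by (cases "q mod P = 0") auto
    have "const_coeff_mod P (r * q) = const_coeff_mod P (r * (q mod P))"
      unfolding const_coeff_mod_def by (simp add: mod_mult_right_eq)
    also have "r * (q mod P) = (\<Sum>p<degree P. smult (coeff (q mod P) p) (r * monom 1 p))"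
      by (subst poly_eq_sum_monoms[OF deg])
        (simp add: sum_distrib_left mult_smult_right[symmetric] smult_monom)
    finally show ?thesis by (simp add: const_coeff_mod_sum const_coeff_mod_smult h)
  qed
  have "coprime P r"
    using prime_elem_imp_coprime[OF field_poly_irreducible_imp_prime[OF irr] ndvd] .
  then obtain x y where "x * r + y * P = 1"
    using bezout_coefficients_fst_snd[of r P] by (metis coprime_iff_gcd_eq_1 gcd.commute)
  then have "r * x = 1 - y * P" by (simp add: algebra_simps)
  then have "const_coeff_mod P (r * x) = coeff (1 mod P) 0"
    unfolding const_coeff_mod_def by (simp add: poly_mod_diff_left)
  also have "1 mod P = 1"
    using degree_pos_if_irreducible[OF irr] by (subst mod_poly_less) auto
  finally show False using all[of x] by simp
qed

lemma coeff_poly_of_nat: "coeff (poly_of_nat n a) k = (if k < n \<and> bit a k then 1 else 0)"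
  unfolding poly_of_nat_def by (simp add: coeff_sum)

lemma degree_poly_of_nat: "0 < n \<Longrightarrow> degree (poly_of_nat n a) < n"
  by (rule degree_lessI) (auto simp: coeff_poly_of_nat)

lemma poly_of_nat_inj:
  assumes "a < 2^n" and "b < 2^n" and "poly_of_nat n a = poly_of_nat n b"
  shows "a = b"
proof (rule nat_eq_if_low_bits_eq[OF assms(1,2)])
  fix k assume "k < n"
  then show "bit a k = bit b k"
    using arg_cong[OF assms(3), of "\<lambda>p. coeff p k"] by (auto simp: coeff_poly_of_nat split: if_splits)
qed

lemma M0_eq_const_coeff_mod: "M0 P p j = const_coeff_mod P (monom 1 (p + j))"
  unfolding M0_def Gamma_def const_coeff_mod_def by simp

lemma alpha_eq_const_coeff_mod:
  assumes "0 < degree P"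
  shows "alpha P v i j = const_coeff_mod P (poly_of_nat (degree P) v * monom 1 (i + j))"
proof -
  let ?r = "poly_of_nat (degree P) v * monom 1 i mod P"
  have P0: "P \<noteq> 0" using assms by auto
  have "degree ?r < degree P"
    using degree_mod_less'[OF P0] assms by (cases "?r = 0") auto
  then have "?r * monom 1 j = (\<Sum>p<degree P. smult (coeff ?r p) (monom 1 (p + j)))"
    by (subst poly_eq_sum_monoms[of ?r "degree P"])
      (simp_all add: sum_distrib_right mult_monom smult_monom)
  then have "const_coeff_mod P (?r * monom 1 j) = alpha P v i j"
    by (simp add: alpha_def M0_eq_const_coeff_mod const_coeff_mod_sum const_coeff_mod_smult)
  then show ?thesis
    unfolding const_coeff_mod_def by (simp add: mod_mult_left_eq mult.assoc mult_monom)
qed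

definition alpha_mask :: "gf2 poly \<Rightarrow> nat \<Rightarrow> nat \<Rightarrow> nat" where
  "alpha_mask P v i = foldr (\<lambda>j acc. if gf2_to_nat (alpha P v i j) = 1 then xor (2^j) acc else acc)
     [0..<degree P] 0"

lemma alpha_mask_less_exp: "alpha_mask P v i < 2 ^ degree P"
  unfolding alpha_mask_def by (rule foldr_xor_exp_less_exp) auto

lemma gf2_bit_alpha_mask: "j < degree P \<Longrightarrow> gf2_bit (alpha_mask P v i) j = alpha P v i j"
  using bit_foldr_xor_exp[of "[0..<degree P]" "\<lambda>j. alpha P v i j = 1" j] gf2_cases[of "alpha P v i j"]
  unfolding alpha_mask_def gf2_to_nat_eq_1_iff gf2_bit_def by auto

lemma foldr_Zq_powers:
  "\<forall>j\<in>set js. g j \<le> 1 \<Longrightarrow>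
   foldr (\<lambda>j M. (Zq n j ^\<^sub>m g j) * M) js (1\<^sub>m (2^n))
   = XZ n 0 (foldr (\<lambda>j acc. if g j = 1 then xor (2^j) acc else acc) js 0)"
proof (induction js)
  case Nil
  then show ?case by (simp add: XZ_zero)
next
  case (Cons j js)
  then have "g j = 0 \<or> g j = 1" by auto
  then show ?case
    using Cons by (auto simp: Zq_eq_XZ XZ_mult)
qed

lemma gen_eq_XZ:
  "gen P v i = (\<i> ^ gf2_to_nat (alpha P v i i)) \<cdot>\<^sub>m XZ (degree P) (2^i) (alpha_mask P v i)"
proof -
  have "foldr (\<lambda>j M. (Zq (degree P) j ^\<^sub>m gf2_to_nat (alpha P v i j)) * M) [0..<degree P]
      (1\<^sub>m (2 ^ degree P)) = XZ (degree P) 0 (alpha_mask P v i)"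
    unfolding alpha_mask_def by (rule foldr_Zq_powers) (auto simp: gf2_to_nat_def)
  then show ?thesis unfolding gen_def Let_def by (simp add: Xq_eq_XZ XZ_mult)
qed

lemma gf2_bit_xor_comb_alpha_mask:
  assumes "0 < degree P" and "j < degree P"
  shows "gf2_bit (xor_comb (alpha_mask P v) (degree P) z) j
    = const_coeff_mod P (poly_of_nat (degree P) v * poly_of_nat (degree P) z * monom 1 j)"
proof -
  let ?n = "degree P" and ?pv = "poly_of_nat (degree P) v"
  have "poly_of_nat ?n z = (\<Sum>i<?n. smult (gf2_bit z i) (monom 1 i))"
    unfolding poly_of_nat_def gf2_bit_def by (simp add: smult_monom)
  then have "?pv * poly_of_nat ?n z * monom 1 j = (\<Sum>i<?n. smult (gf2_bit z i) (?pv * monom 1 (i + j)))"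
    by (simp add: sum_distrib_left sum_distrib_right mult.assoc mult_monom)
  then show ?thesis
    using assms
    by (simp add: gf2_bit_xor_comb gf2_bit_alpha_mask alpha_eq_const_coeff_mod const_coeff_mod_sum
        const_coeff_mod_smult)
qed

lemma xor_comb_alpha_mask_inj:
  assumes irr: "irreducible P" and n: "degree P = n"
    and v: "v < 2^n" and v': "v' < 2^n" and z: "z < 2^n" and z0: "z \<noteq> 0"
    and eq: "xor_comb (alpha_mask P v) n z = xor_comb (alpha_mask P v') n z"
  shows "v = v'"
proof -
  have dP: "0 < n" and P0: "P \<noteq> 0" using degree_pos_if_irreducible[OF irr] irr n by auto
  define pv pv' pz where "pv = poly_of_nat n v" and "pv' = poly_of_nat n v'" and "pz = poly_of_nat n z"
  have "const_coeff_mod P ((pv - pv') * pz * monom 1 j) = 0" if "j < degree P" for j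
    using gf2_bit_xor_comb_alpha_mask[of P j v z] gf2_bit_xor_comb_alpha_mask[of P j v' z] that
      dP n eq
    by (simp add: pv_def pv'_def pz_def left_diff_distrib const_coeff_mod_diff)
  then have "P dvd (pv - pv') * pz"
    by (intro dvd_if_const_coeff_mod_mult_monom_eq_0[OF irr])
  then have "P dvd pv - pv' \<or> P dvd pz"
    using field_poly_irreducible_imp_prime[OF irr] prime_elem_dvd_mult_iff by blast
  moreover have "degree (pv - pv') < degree P" and "degree pz < degree P"
    using degree_diff_le_max[of pv pv'] degree_poly_of_nat[OF dP] n
    unfolding pv_def pv'_def pz_def by (auto intro: le_less_trans)
  ultimately have "pv - pv' = 0 \<or> pz = 0"
    using poly_divides_conv0 P0 by blast
  moreover have "pz \<noteq> 0"
  proof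
    assume "pz = 0"
    then have "poly_of_nat n z = poly_of_nat n 0" by (simp add: pz_def poly_of_nat_def)
    then show False using poly_of_nat_inj[OF z, of 0] z0 by simp
  qed
  ultimately show ?thesis using poly_of_nat_inj[OF v v'] by (simp add: pv_def pv'_def)
qed

section \<open>The ensemble meets every Pauli string at most once\<close>

definition pauli_label :: "gf2 poly \<Rightarrow> nat option \<Rightarrow> nat \<Rightarrow> nat \<times> nat" where
  "pauli_label P k z =
     (case k of None \<Rightarrow> (0, z) | Some v \<Rightarrow> (z, xor_comb (alpha_mask P v) (degree P) z))"

definition mub_unitaries :: "gf2 poly \<Rightarrow> nat \<Rightarrow> (nat \<Rightarrow> complex mat) \<Rightarrow> bool" where
  "mub_unitaries P n U \<longleftrightarrow> (\<forall>v < 2^n. unitary_mat n (U v) \<and>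
      (\<forall>i < n. mat_adjoint (U v) * Zq n i * U v = gen P v i \<or>
               mat_adjoint (U v) * Zq n i * U v = - gen P v i))"

lemma finite_Idx [simp]: "finite (Idx n)"
  unfolding Idx_def by simp

lemma unitary_ens:
  "\<forall>v<2^n. unitary_mat n (U v) \<Longrightarrow> k \<in> Idx n \<Longrightarrow> unitary_mat n (ens n U k)"
  by (auto simp: Idx_def ens_def unitary_mat_def)

lemma ens_conj_Z:
  assumes n: "degree P = n"
    and U: "mub_unitaries P n U" and k: "k \<in> Idx n" and z: "z < 2^n"
  shows "\<exists>d. cmod d = 1 \<and>
    mat_adjoint (ens n U k) * XZ n 0 z * ens n U k = d \<cdot>\<^sub>m case_prod (pauli n) (pauli_label P k z)"
proof (cases k)
  case None
  then show ?thesis by (intro exI[of _ 1]) (simp add: ens_def pauli_label_def pauli_eq_XZ)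
next
  case (Some v)
  with k have v: "v < 2^n" by (auto simp: Idx_def)
  let ?W = "U v" and ?a = "alpha_mask P v"
  have "\<exists>c. cmod c = 1 \<and> mat_adjoint ?W * XZ n 0 (2^i) * ?W = c \<cdot>\<^sub>m XZ n (2^i) (?a i)"
    if i: "i < n" for i
  proof -
    let ?c = "\<i> ^ gf2_to_nat (alpha P v i i)"
    have "mat_adjoint ?W * XZ n 0 (2^i) * ?W = ?c \<cdot>\<^sub>m XZ n (2^i) (?a i) \<or>
          mat_adjoint ?W * XZ n 0 (2^i) * ?W = (- ?c) \<cdot>\<^sub>m XZ n (2^i) (?a i)"
      using U v i n by (simp add: mub_unitaries_def Zq_eq_XZ gen_eq_XZ uminus_smult_mat)
    moreover have "cmod ?c = 1" and "cmod (- ?c) = 1" by (simp_all add: norm_power)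
    ultimately show ?thesis by blast
  qed
  then obtain d where d: "cmod d = 1"
    and e: "mat_adjoint ?W * XZ n 0 (take_bit n z) * ?W = d \<cdot>\<^sub>m XZ n (take_bit n z) (xor_comb ?a n z)"
    using conj_Z_take_bit[of n ?W ?a n z] U v unfolding mub_unitaries_def by auto
  let ?k = "overlap n z (xor_comb ?a n z)"
  have "take_bit n z = z" using z by (simp add: take_bit_nat_eq_self_iff)
  moreover have "XZ n z (xor_comb ?a n z) = (-\<i>) ^ ?k \<cdot>\<^sub>m pauli n z (xor_comb ?a n z)"
    by (rule XZ_eq_pauli)
  ultimately show ?thesis
    using d e Some n
    by (intro exI[of _ "d * (-\<i>) ^ ?k"])
      (simp add: ens_def pauli_label_def smult_smult_mat norm_mult norm_power)
qed

lemma pauli_label_less_exp: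
  "degree P = n \<Longrightarrow> z < 2^n \<Longrightarrow> pauli_label P k z \<in> {..<2^n} \<times> {..<2^n}"
  using alpha_mask_less_exp xor_comb_less_exp by (auto simp: pauli_label_def split: option.split)

lemma pauli_label_inj_on:
  assumes irr: "irreducible P" and n: "degree P = n"
  shows "inj_on (case_prod (pauli_label P)) (Idx n \<times> {1..<2^n})"
proof (rule inj_onI, clarify)
  fix k z k' z' assume k: "k \<in> Idx n" and k': "k' \<in> Idx n"
    and z: "z \<in> {1..<2^n}" and z': "z' \<in> {1..<2^n}"
    and e: "pauli_label P k z = pauli_label P k' z'"
  show "k = k' \<and> z = z'"
  proof (cases "k = None \<or> k' = None")
    case True
    then show ?thesis using e z z' by (auto simp: pauli_label_def split: option.splits)
  next
    case False
    then obtain v v' where v: "k = Some v" and v': "k' = Some v'" by auto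
    then have zz: "z = z'" using e by (simp add: pauli_label_def)
    then have "xor_comb (alpha_mask P v) n z = xor_comb (alpha_mask P v') n z"
      using e n v v' by (simp add: pauli_label_def)
    moreover have "v < 2^n" and "v' < 2^n" using k k' v v' by (auto simp: Idx_def)
    ultimately show ?thesis using xor_comb_alpha_mask_inj[OF irr n] z zz v v' by auto
  qed
qed

lemma trace_Phi_le_Bval: "b < 2^n \<Longrightarrow> cmod (trace (Phi n W b * traceless n Ob)) \<le> Bval n Ob W"
  unfolding Bval_def by (rule Max_ge) auto

lemma Bval_nonneg: "0 \<le> Bval n Ob W"
proof -
  have "cmod (trace (Phi n W 0 * traceless n Ob)) \<le> Bval n Ob W"
    by (rule trace_Phi_le_Bval) simp
  then show ?thesis by (meson norm_ge_zero order_trans)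
qed

lemma Bsum_nonneg: "0 \<le> Bsum n U Ob"
  unfolding Bsum_def by (rule sum_nonneg) (rule Bval_nonneg)

lemma Bval_le_sum_conj_Z:
  assumes W: "unitary_mat n W" and Ob: "Ob \<in> carrier_mat (2^n) (2^n)"
    and Q: "\<And>z. z < 2^n \<Longrightarrow> \<exists>d. cmod d = 1 \<and> mat_adjoint W * XZ n 0 z * W = d \<cdot>\<^sub>m Q z"
  shows "Bval n Ob W \<le> (\<Sum>z\<in>{1..<2^n}. cmod (trace (Q z * traceless n Ob))) / 2^n"
  unfolding Bval_def
  using trace_Phi_le_sum_conj_Z[OF W traceless_carrier[OF Ob] trace_traceless[OF Ob] Q]
  by (intro Max.boundedI) (auto simp: lessThan_empty_iff)

lemma Bsum_le_stab_norm:
  assumes irr: "irreducible P" and n: "degree P = n"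
    and U: "mub_unitaries P n U" and Ob: "Ob \<in> carrier_mat (2^n) (2^n)"
  shows "Bsum n U Ob \<le> stab_norm n (traceless n Ob)"
proof -
  define h where "h p = cmod (trace (case_prod (pauli n) p * traceless n Ob))" for p
  let ?L = "case_prod (pauli_label P)" and ?I = "Idx n \<times> {1..<2^n}"
  have Uu: "\<forall>v<2^n. unitary_mat n (U v)" using U unfolding mub_unitaries_def by blast
  have "Bval n Ob (ens n U k) \<le> (\<Sum>z\<in>{1..<2^n}. h (pauli_label P k z)) / 2^n"
    if k: "k \<in> Idx n" for k
    unfolding h_def by (rule Bval_le_sum_conj_Z[OF unitary_ens[OF Uu k] Ob ens_conj_Z[OF n U k]])
  then have "Bsum n U Ob \<le> (\<Sum>k\<in>Idx n. (\<Sum>z\<in>{1..<2^n}. h (pauli_label P k z)) / 2^n)"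
    unfolding Bsum_def by (rule sum_mono)
  also have "\<dots> = (\<Sum>p\<in>?L ` ?I. h p) / 2^n"
    using sum.reindex[OF pauli_label_inj_on[OF irr n], of h]
    by (simp add: sum_divide_distrib[symmetric] sum.cartesian_product split_def)
  also have "\<dots> \<le> (\<Sum>p\<in>{..<2^n} \<times> {..<2^n}. h p) / 2^n"
    using pauli_label_less_exp[OF n]
    by (intro divide_right_mono sum_mono2) (auto simp: h_def image_subset_iff)
  also have "\<dots> = stab_norm n (traceless n Ob)"
    unfolding stab_norm_def h_def by (simp add: sum_Paulis)
  finally show ?thesis .
qed

section \<open>The variance bound\<close>

lemma weighted_variance_le_sq:
  fixes p x :: "'a \<Rightarrow> real"
  assumes p0: "\<And>s. s \<in> S \<Longrightarrow> 0 \<le> p s" and p1: "(\<Sum>s\<in>S. p s) = 1"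
    and bd: "\<And>s. s \<in> S \<Longrightarrow> \<bar>x s - c\<bar> \<le> B"
  shows "(\<Sum>s\<in>S. p s * (x s - (\<Sum>t\<in>S. p t * x t))^2) \<le> B^2"
proof -
  define m where "m = (\<Sum>t\<in>S. p t * x t)"
  have px: "(\<Sum>s\<in>S. p s * (x s - c)) = m - c"
    unfolding m_def by (simp add: right_diff_distrib sum_subtractf sum_distrib_right[symmetric] p1)
  \<comment> \<open>the variance is the second moment about c minus the squared shift of the mean\<close>
  have "(\<Sum>s\<in>S. p s * (x s - m)^2)
      = (\<Sum>s\<in>S. p s * (x s - c)^2 - 2 * (m - c) * (p s * (x s - c)) + (m - c)^2 * p s)"
    by (rule sum.cong) (simp_all add: power2_eq_square algebra_simps)
  also have "\<dots> = (\<Sum>s\<in>S. p s * (x s - c)^2) - (m - c)^2"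
    using px p1 by (simp add: sum.distrib sum_subtractf sum_distrib_left[symmetric] power2_eq_square)
  also have "\<dots> \<le> (\<Sum>s\<in>S. p s * B^2)"
  proof -
    have "p s * (x s - c)^2 \<le> p s * B^2" if s: "s \<in> S" for s
      using p0[OF s] bd[OF s]
      by (intro mult_left_mono) (metis abs_ge_zero power2_abs power_mono)
    then have "(\<Sum>s\<in>S. p s * (x s - c)^2) \<le> (\<Sum>s\<in>S. p s * B^2)" by (rule sum_mono)
    then show ?thesis using zero_le_power2[of "m - c"] by linarith
  qed
  also have "\<dots> = B^2" using p1 by (simp add: sum_distrib_right[symmetric])
  finally show ?thesis unfolding m_def .
qed

lemma density_conj_diag_nonneg:
  assumes "density_mat n \<rho>" and W: "W \<in> carrier_mat (2^n) (2^n)" and b: "b < 2^n"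
  shows "0 \<le> Re ((W * \<rho> * mat_adjoint W) $$ (b, b))"
proof -
  have "col (mat_adjoint W) b \<in> carrier_vec (2^n)" using W by (auto intro!: carrier_vecI)
  then show ?thesis
    using assms diag_conj_eq_quadratic_form[OF W _ b, of \<rho>]
    unfolding density_mat_def hermitian_mat_def by auto
qed

lemma sum_density_conj_diag:
  assumes \<rho>: "density_mat n \<rho>" and W: "unitary_mat n W"
  shows "(\<Sum>b<2^n. Re ((W * \<rho> * mat_adjoint W) $$ (b, b))) = 1"
proof -
  have \<rho>c: "\<rho> \<in> carrier_mat (2^n) (2^n)" and "trace \<rho> = 1"
    using \<rho> unfolding density_mat_def hermitian_mat_def by auto
  then have "trace (W * \<rho> * mat_adjoint W) = 1" using trace_unitary_conj[OF W \<rho>c] by simp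
  moreover have "dim_row (W * \<rho> * mat_adjoint W) = 2^n" using W unfolding unitary_mat_def by auto
  ultimately show ?thesis unfolding trace_def by (metis Re_sum one_complex.simps(1))
qed

lemma pU_nonneg: "0 \<le> pU n U Ob k"
  unfolding pU_def using Bval_nonneg Bsum_nonneg by simp

lemma prob_nonneg:
  assumes U: "\<forall>v<2^n. unitary_mat n (U v)" and \<rho>: "density_mat n \<rho>"
    and kb: "(k, b) \<in> outcomes n U Ob"
  shows "0 \<le> prob n U Ob \<rho> k b"
proof -
  have k: "k \<in> Idx n" and b: "b < 2^n" using kb by (auto simp: outcomes_def)
  have "ens n U k \<in> carrier_mat (2^n) (2^n)"
    using unitary_ens[OF U k] unfolding unitary_mat_def by auto
  then show ?thesis
    unfolding prob_def by (intro mult_nonneg_nonneg pU_nonneg density_conj_diag_nonneg[OF \<rho> _ b])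
qed

lemma Bsum_pos_if_outcome:
  assumes "(k, b) \<in> outcomes n U Ob"
  shows "0 < Bsum n U Ob"
proof -
  have "0 < Bval n Ob (ens n U k) / Bsum n U Ob"
    using assms by (simp add: outcomes_def pU_def)
  then show ?thesis using Bsum_nonneg[of n U Ob] by (cases "Bsum n U Ob = 0") auto
qed

lemma sum_prob_outcomes:
  assumes U: "\<forall>v<2^n. unitary_mat n (U v)" and \<rho>: "density_mat n \<rho>" and B: "0 < Bsum n U Ob"
  shows "(\<Sum>(k, b)\<in>outcomes n U Ob. prob n U Ob \<rho> k b) = 1"
proof -
  let ?K = "{k \<in> Idx n. 0 < pU n U Ob k}"
  have "(\<Sum>(k, b)\<in>outcomes n U Ob. prob n U Ob \<rho> k b) = (\<Sum>k\<in>?K. pU n U Ob k)"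
    unfolding outcomes_def prob_def
    by (simp add: sum.cartesian_product[symmetric] sum_distrib_left[symmetric]
        sum_density_conj_diag[OF \<rho> unitary_ens[OF U]])
  also have "\<dots> = (\<Sum>k\<in>Idx n. pU n U Ob k)"
    using pU_nonneg[of n U Ob] by (intro sum.mono_neutral_left) (auto simp: le_less)
  also have "\<dots> = 1"
    using B unfolding pU_def Bsum_def by (simp add: sum_divide_distrib[symmetric])
  finally show ?thesis .
qed

lemma est_deviation_le_Bsum:
  assumes U: "\<forall>v<2^n. unitary_mat n (U v)" and Ob: "Ob \<in> carrier_mat (2^n) (2^n)"
    and kb: "(k, b) \<in> outcomes n U Ob"
  shows "\<bar>est n U Ob k b - Re (trace Ob) / 2^n\<bar> \<le> Bsum n U Ob"
proof -
  have k: "k \<in> Idx n" and pk: "0 < pU n U Ob k" and b: "b < 2^n"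
    using kb unfolding outcomes_def by auto
  have Wc: "ens n U k \<in> carrier_mat (2^n) (2^n)"
    using unitary_ens[OF U k] unfolding unitary_mat_def by auto
  have "trace (traceless n Ob * Phi n (ens n U k) b) = trace (Phi n (ens n U k) b * traceless n Ob)"
    using Wc traceless_carrier[OF Ob] by (intro trace_mult_comm[of _ "2^n" "2^n"]) (auto simp: Phi_def)
  then have "\<bar>est n U Ob k b - Re (trace Ob) / 2^n\<bar>
      \<le> cmod (trace (Phi n (ens n U k) b * traceless n Ob)) / pU n U Ob k"
    using pk abs_Re_le_cmod by (simp add: est_def divide_right_mono)
  also have "\<dots> \<le> Bval n Ob (ens n U k) / pU n U Ob k"
    using pk trace_Phi_le_Bval[OF b] by (intro divide_right_mono) auto
  also have "\<dots> = Bsum n U Ob"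
    using pk Bsum_pos_if_outcome[OF kb] unfolding pU_def by (auto simp: field_simps)
  finally show ?thesis .
qed

lemma est_var_le_Bsum_sq:
  assumes U: "\<forall>v<2^n. unitary_mat n (U v)" and Ob: "Ob \<in> carrier_mat (2^n) (2^n)"
    and \<rho>: "density_mat n \<rho>"
  shows "est_var n U Ob \<rho> \<le> (Bsum n U Ob)^2"
proof (cases "outcomes n U Ob = {}")
  case True
  then show ?thesis by (simp add: est_var_def)
next
  case False
  then have B: "0 < Bsum n U Ob" using Bsum_pos_if_outcome by fast
  show ?thesis
    using weighted_variance_le_sq[of "outcomes n U Ob" "case_prod (prob n U Ob \<rho>)"
        "case_prod (est n U Ob)" "Re (trace Ob) / 2^n" "Bsum n U Ob"]
      prob_nonneg[OF U \<rho>] sum_prob_outcomes[OF U \<rho> B] est_deviation_le_Bsum[OF U Ob]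
    unfolding est_var_def est_mean_def by (auto simp: split_def)
qed

theorem theorem3:
  fixes P :: "gf2 poly" and n :: nat and U :: "nat \<Rightarrow> complex mat"
    and Ob \<rho> :: "complex mat"
  assumes "irreducible P" and "degree P = n"
    and "\<forall>v < 2^n. clifford n (U v) \<and>
           (\<forall>i < n. mat_adjoint (U v) * Zq n i * U v = gen P v i \<or>
                    mat_adjoint (U v) * Zq n i * U v = - gen P v i)"
    and "hermitian_mat n Ob" and "\<not> (\<exists>c. Ob = c \<cdot>\<^sub>m 1\<^sub>m (2^n))"
    and "density_mat n \<rho>"
  shows "est_var n U Ob \<rho> \<le> (Bsum n U Ob)^2 \<and>
         (Bsum n U Ob)^2 \<le> (stab_norm n (traceless n Ob))^2"
proof -
  have U: "mub_unitaries P n U" and Uu: "\<forall>v<2^n. unitary_mat n (U v)"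
    using assms(3) unfolding mub_unitaries_def clifford_def by blast+
  have Ob: "Ob \<in> carrier_mat (2^n) (2^n)" using assms(4) unfolding hermitian_mat_def by simp
  have "est_var n U Ob \<rho> \<le> (Bsum n U Ob)^2"
    by (rule est_var_le_Bsum_sq[OF Uu Ob assms(6)])
  moreover have "(Bsum n U Ob)^2 \<le> (stab_norm n (traceless n Ob))^2"
    using Bsum_le_stab_norm[OF assms(1,2) U Ob] Bsum_nonneg by (rule power_mono)
  ultimately show ?thesis ..
qed

end
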